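(* Let $n\ge2$, let $K_n$ be the complete graph on $n$ vertices, let $\mathfrak g_n$ be the Kac--Moody algebra over $\mathbb R$ with diagram $K_n$, and let $\mathfrak k_n$ be its maximal compact subalgebra. Then there is a surjective Lie algebra homomorphism $\mathfrak k_n\to\mathfrak{so}_{n+1}(\mathbb R)$.
   Context: The Kac--Moody algebra with diagram $K_n$ has generalized Cartan matrix with $a_{ii}=2$ and $a_{ij}=-1$ for all $i\ne j$; its maximal compact subalgebra is the fixed point algebra of the Cartan--Chevalley involution $e_i\mapsto-f_i$, $f_i\mapsto-e_i$, $h_i\mapsto-h_i$, and by Berman's theorem is the Lie algebra with generators $X_1,\dots,X_n$ and relations $[X_i,[X_i,X_j]]=-X_j$ for all $i\ne j$. *)

theory Defs
  imports "Jordan_Normal_Form.Matrix"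
begin

datatype lie_term = LGen nat | LZero | LAdd lie_term lie_term
  | LSmul real lie_term | LBr lie_term lie_term

fun kc_wf :: "nat \<Rightarrow> lie_term \<Rightarrow> bool" where
  "kc_wf n (LGen i) = (i < n)"
| "kc_wf n LZero = True"
| "kc_wf n (LAdd s t) = (kc_wf n s \<and> kc_wf n t)"
| "kc_wf n (LSmul c s) = kc_wf n s"
| "kc_wf n (LBr s t) = (kc_wf n s \<and> kc_wf n t)"

text \<open>The congruence presenting k_n (Berman): the Lie algebra over the reals
  generated by X_i with relations [X_i,[X_i,X_j]] = -X_j for i \<noteq> j.\<close>
inductive kc_eq :: "nat \<Rightarrow> lie_term \<Rightarrow> lie_term \<Rightarrow> bool" for n where
  refl: "kc_eq n s s"
| sym: "kc_eq n s t \<Longrightarrow> kc_eq n t s"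
| trans: "kc_eq n s t \<Longrightarrow> kc_eq n t u \<Longrightarrow> kc_eq n s u"
| cong_add: "kc_eq n s s' \<Longrightarrow> kc_eq n t t' \<Longrightarrow> kc_eq n (LAdd s t) (LAdd s' t')"
| cong_smul: "kc_eq n s s' \<Longrightarrow> kc_eq n (LSmul c s) (LSmul c s')"
| cong_br: "kc_eq n s s' \<Longrightarrow> kc_eq n t t' \<Longrightarrow> kc_eq n (LBr s t) (LBr s' t')"
| add_assoc: "kc_eq n (LAdd (LAdd s t) u) (LAdd s (LAdd t u))"
| add_comm: "kc_eq n (LAdd s t) (LAdd t s)"
| add_zero: "kc_eq n (LAdd s LZero) s"
| add_inv: "kc_eq n (LAdd s (LSmul (-1) s)) LZero"
| smul_add: "kc_eq n (LSmul c (LAdd s t)) (LAdd (LSmul c s) (LSmul c t))"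
| add_smul: "kc_eq n (LSmul (c + d) s) (LAdd (LSmul c s) (LSmul d s))"
| smul_smul: "kc_eq n (LSmul c (LSmul d s)) (LSmul (c * d) s)"
| smul_one: "kc_eq n (LSmul 1 s) s"
| br_add: "kc_eq n (LBr (LAdd s t) u) (LAdd (LBr s u) (LBr t u))"
| br_smul: "kc_eq n (LBr (LSmul c s) t) (LSmul c (LBr s t))"
| br_alt: "kc_eq n (LBr s s) LZero"
| jacobi: "kc_eq n (LAdd (LBr s (LBr t u)) (LAdd (LBr t (LBr u s)) (LBr u (LBr s t)))) LZero"
| rel: "i < n \<Longrightarrow> j < n \<Longrightarrow> i \<noteq> j \<Longrightarrow>
     kc_eq n (LBr (LGen i) (LBr (LGen i) (LGen j))) (LSmul (-1) (LGen j))"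

definition so_mat :: "nat \<Rightarrow> real mat set" where
  "so_mat m = {A \<in> carrier_mat m m. transpose_mat A = - A}"

definition mat_comm :: "real mat \<Rightarrow> real mat \<Rightarrow> real mat" where
  "mat_comm A B = A * B - B * A"

text \<open>A map on representing terms inducing a Lie algebra homomorphism
  k_n = {wf terms}/kc_eq n  -->  so_m(R).\<close>
definition kc_hom_so :: "nat \<Rightarrow> nat \<Rightarrow> (lie_term \<Rightarrow> real mat) \<Rightarrow> bool" where
  "kc_hom_so n m f \<longleftrightarrow>
     (\<forall>t. kc_wf n t \<longrightarrow> f t \<in> so_mat m) \<and>
     (\<forall>s t. kc_wf n s \<longrightarrow> kc_wf n t \<longrightarrow> kc_eq n s t \<longrightarrow> f s = f t) \<and>
     f LZero = 0\<^sub>m m m \<and>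
     (\<forall>s t. kc_wf n s \<longrightarrow> kc_wf n t \<longrightarrow> f (LAdd s t) = f s + f t) \<and>
     (\<forall>c s. kc_wf n s \<longrightarrow> f (LSmul c s) = c \<cdot>\<^sub>m f s) \<and>
     (\<forall>s t. kc_wf n s \<longrightarrow> kc_wf n t \<longrightarrow> f (LBr s t) = mat_comm (f s) (f t))"

end

theory Submission
  imports Defs "HOL-Library.Product_Lexorder"
begin

(* Let E_pq = e_p e_q^T - e_q e_p^T (p < q \<le> n) be the elementary skew
   matrices of size n+1; they form a basis of so_(n+1).  For pairwise distinct a, b, c
   one has [E_ac, E_bc] = E_ba and [E_ac, E_ba] = -E_bc.  Hence sending the generator
   X_i to E_in (i < n) satisfies Berman's relations [X_i,[X_i,X_j]] = -X_j, and so
   induces a Lie algebra homomorphism k_n \<rightarrow> so_(n+1).  It is surjective, since E_in is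
   the image of X_i and E_pq = [E_qn, E_pn] is the image of [X_q, X_p] for p < q < n. *)

definition elem_skew :: "nat \<Rightarrow> nat \<Rightarrow> nat \<Rightarrow> real mat" where
  "elem_skew m a b =
     mat m m (\<lambda>(r, s). (if r = a \<and> s = b then 1 else 0) - (if r = b \<and> s = a then 1 else 0))"

lemma elem_skew_carrier [simp]: "elem_skew m a b \<in> carrier_mat m m"
  and elem_skew_dim [simp]: "dim_row (elem_skew m a b) = m" "dim_col (elem_skew m a b) = m"
  by (simp_all add: elem_skew_def)

lemma elem_skew_index [simp]:
  "r < m \<Longrightarrow> s < m \<Longrightarrow> elem_skew m a b $$ (r, s) =
     (if r = a \<and> s = b then 1 else 0) - (if r = b \<and> s = a then 1 else 0)"
  by (simp add: elem_skew_def)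

lemma elem_skew_in_so: "elem_skew m a b \<in> so_mat m"
proof -
  have "transpose_mat (elem_skew m a b) = - elem_skew m a b"
  proof (rule eq_matI)
    fix r s assume "r < dim_row (- elem_skew m a b)" "s < dim_col (- elem_skew m a b)"
    then have rs: "r < m" "s < m" by simp_all
    have "transpose_mat (elem_skew m a b) $$ (r, s) =
        (if s = a \<and> r = b then 1 else 0) - (if s = b \<and> r = a then 1 else 0)"
      using rs by simp
    also have "\<dots> = - ((if r = a \<and> s = b then 1 else 0) - (if r = b \<and> s = a then 1 else 0))"
      by (cases "r = a"; cases "s = b"; cases "r = b"; cases "s = a") simp_all
    also have "\<dots> = (- elem_skew m a b) $$ (r, s)"
      using rs by simp
    finally show "transpose_mat (elem_skew m a b) $$ (r, s) = (- elem_skew m a b) $$ (r, s)" .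
  qed simp_all
  then show ?thesis by (simp add: so_mat_def)
qed

text \<open>Entries of a product of two elementary skew matrices (only the middle index
  is summed over, so the sum collapses to at most four terms).\<close>
lemma elem_skew_mult_index:
  assumes "a < m" "b < m" "r < m" "s < m" "a \<noteq> b"
  shows "(elem_skew m a b * elem_skew m c d) $$ (r, s) =
    (if r = a then (if b = c \<and> s = d then 1 else 0) - (if b = d \<and> s = c then 1 else 0) else 0)
  - (if r = b then (if a = c \<and> s = d then 1 else 0) - (if a = d \<and> s = c then 1 else 0) else 0)"
proof -
  have "(elem_skew m a b * elem_skew m c d) $$ (r, s) =
      (\<Sum>k\<in>{0..<m}. elem_skew m a b $$ (r, k) * elem_skew m c d $$ (k, s))"
    using assms by (simp add: scalar_prod_def del: elem_skew_index)
  also have "\<dots> = (\<Sum>k\<in>{0..<m}.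
      ((if r = a \<and> k = b then 1 else 0) - (if r = b \<and> k = a then 1 else 0)) *
      ((if k = c \<and> s = d then 1 else 0) - (if k = d \<and> s = c then 1 else 0)))"
    using assms by (intro sum.cong) auto
  also have "\<dots> = (\<Sum>k\<in>{0..<m}.
      (if k = b then (if r = a then 1 else 0) *
         ((if b = c \<and> s = d then 1 else 0) - (if b = d \<and> s = c then 1 else 0)) else 0)
    - (if k = a then (if r = b then 1 else 0) *
         ((if a = c \<and> s = d then 1 else 0) - (if a = d \<and> s = c then 1 else 0)) else 0))"
    by (intro sum.cong) auto
  finally show ?thesis
    using assms by (simp add: sum_subtractf)
qed

lemma mat_comm_elem_skew_common:
  assumes "a < m" "b < m" "c < m" "a \<noteq> b" "a \<noteq> c" "b \<noteq> c"
  shows "mat_comm (elem_skew m a c) (elem_skew m b c) = elem_skew m b a"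
  unfolding mat_comm_def
  by (rule eq_matI)
    (use assms in \<open>auto simp del: index_mult_mat simp: index_mult_mat(2,3) elem_skew_mult_index\<close>)

lemma mat_comm_elem_skew_chain:
  assumes "a < m" "b < m" "c < m" "a \<noteq> b" "a \<noteq> c" "b \<noteq> c"
  shows "mat_comm (elem_skew m a c) (elem_skew m b a) = - elem_skew m b c"
  unfolding mat_comm_def
  by (rule eq_matI)
    (use assms in \<open>auto simp del: index_mult_mat simp: index_mult_mat(2,3) elem_skew_mult_index\<close>)

lemma skew_expansion_index:
  assumes A: "A \<in> so_mat m" and rs: "r < m" "s < m"
  shows "(\<Sum>x\<in>{(p, q). p < q \<and> q < m}. A $$ x * elem_skew m (fst x) (snd x) $$ (r, s))
         = A $$ (r, s)"
proof -
  let ?P = "{(p, q). p < q \<and> q < m}"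
  have finP: "finite ?P"
    by (rule finite_subset[of _ "{..<m} \<times> {..<m}"]) auto
  have carrier: "A \<in> carrier_mat m m" and transpose: "transpose_mat A = - A"
    using A by (auto simp: so_mat_def)
  have skew: "A $$ (s, r) = - A $$ (r, s)"
  proof -
    have "transpose_mat A $$ (r, s) = (- A) $$ (r, s)"
      using transpose by simp
    then show ?thesis using carrier rs by auto
  qed
  have "(\<Sum>x\<in>?P. A $$ x * elem_skew m (fst x) (snd x) $$ (r, s))
      = (\<Sum>x\<in>?P. (if x = (r, s) then A $$ x else 0) - (if x = (s, r) then A $$ x else 0))"
  proof (rule sum.cong[OF HOL.refl])
    fix x assume "x \<in> ?P"
    then obtain p q where x: "x = (p, q)" "p < q" "q < m" by auto
    show "A $$ x * elem_skew m (fst x) (snd x) $$ (r, s)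
        = (if x = (r, s) then A $$ x else 0) - (if x = (s, r) then A $$ x else 0)"
      using x rs by simp
  qed
  also have "\<dots> = (if (r, s) \<in> ?P then A $$ (r, s) else 0) - (if (s, r) \<in> ?P then A $$ (s, r) else 0)"
    using finP by (simp add: sum_subtractf)
  also have "\<dots> = A $$ (r, s)"
  proof (cases r s rule: linorder_cases)
    case greater
    then show ?thesis using rs skew by simp
  qed (use rs skew in simp_all)
  finally show ?thesis .
qed

lemma mat_comm_carrier:
  "A \<in> carrier_mat m m \<Longrightarrow> B \<in> carrier_mat m m \<Longrightarrow> mat_comm A B \<in> carrier_mat m m"
  unfolding mat_comm_def by (simp add: minus_carrier_mat)

lemma mat_comm_add_left:
  fixes A B C :: "real mat"
  assumes "A \<in> carrier_mat m m" "B \<in> carrier_mat m m" "C \<in> carrier_mat m m"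
  shows "mat_comm (A + B) C = mat_comm A C + mat_comm B C"
proof -
  have "mat_comm (A + B) C = (A * C + B * C) - (C * A + C * B)"
    using assms by (simp add: mat_comm_def add_mult_distrib_mat[where nr=m and n=m and nc=m]
      mult_add_distrib_mat[where nr=m and n=m and nc=m])
  also have "\<dots> = mat_comm A C + mat_comm B C"
    unfolding mat_comm_def by (rule eq_matI) (use assms in auto)
  finally show ?thesis .
qed

lemma mat_comm_smult_left:
  fixes A B :: "real mat"
  assumes "A \<in> carrier_mat m m" "B \<in> carrier_mat m m"
  shows "mat_comm (c \<cdot>\<^sub>m A) B = c \<cdot>\<^sub>m mat_comm A B"
proof -
  have "mat_comm (c \<cdot>\<^sub>m A) B = c \<cdot>\<^sub>m (A * B) - c \<cdot>\<^sub>m (B * A)"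
    using assms by (simp add: mat_comm_def mult_smult_assoc_mat[where nr=m and n=m and nc=m]
      mult_smult_distrib[where nr=m and n=m and nc=m])
  also have "\<dots> = c \<cdot>\<^sub>m mat_comm A B"
    unfolding mat_comm_def by (rule eq_matI) (use assms in \<open>auto simp: algebra_simps\<close>)
  finally show ?thesis .
qed

lemma mat_comm_self:
  fixes A :: "real mat"
  assumes "A \<in> carrier_mat m m"
  shows "mat_comm A A = 0\<^sub>m m m"
  unfolding mat_comm_def by (rule eq_matI) (use assms in auto)

lemma mat_comm_jacobi:
  fixes A B C :: "real mat"
  assumes carrier: "A \<in> carrier_mat m m" "B \<in> carrier_mat m m" "C \<in> carrier_mat m m"
  shows "mat_comm A (mat_comm B C) + (mat_comm B (mat_comm C A) + mat_comm C (mat_comm A B))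
         = 0\<^sub>m m m"
proof -
  have expand: "mat_comm X (mat_comm Y Z) = (X * (Y * Z) - X * (Z * Y)) - (Y * (Z * X) - Z * (Y * X))"
    if "X \<in> carrier_mat m m" "Y \<in> carrier_mat m m" "Z \<in> carrier_mat m m" for X Y Z :: "real mat"
    using that unfolding mat_comm_def
    by (simp add: mult_minus_distrib_mat[where nr=m and n=m and nc=m]
      minus_mult_distrib_mat[where nr=m and n=m and nc=m])
  have cancel: "P1 - P2 - (P3 - P4) + (P3 - P5 - (P6 - P2) + (P6 - P4 - (P1 - P5))) = 0\<^sub>m m m"
    if "P1 \<in> carrier_mat m m" "P2 \<in> carrier_mat m m" "P3 \<in> carrier_mat m m"
       "P4 \<in> carrier_mat m m" "P5 \<in> carrier_mat m m" "P6 \<in> carrier_mat m m"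
    for P1 P2 P3 P4 P5 P6 :: "real mat"
    by (rule eq_matI) (use that in auto)
  show ?thesis
    using carrier by (simp add: expand) (rule cancel; auto)
qed

lemma so_mat_zero: "0\<^sub>m m m \<in> so_mat m"
  unfolding so_mat_def by (auto intro!: eq_matI)

lemma so_mat_add: "A \<in> so_mat m \<Longrightarrow> B \<in> so_mat m \<Longrightarrow> A + B \<in> so_mat m"
  unfolding so_mat_def by (auto simp: transpose_add[of _ m m])

lemma so_mat_smult:
  assumes "A \<in> so_mat m"
  shows "c \<cdot>\<^sub>m A \<in> so_mat m"
proof -
  have "transpose_mat (c \<cdot>\<^sub>m A) = c \<cdot>\<^sub>m transpose_mat A"
    by (rule eq_matI) auto
  also have "\<dots> = - (c \<cdot>\<^sub>m A)"
    using assms by (auto simp: so_mat_def intro!: eq_matI)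
  finally show ?thesis using assms by (simp add: so_mat_def)
qed

lemma so_mat_comm:
  assumes "A \<in> so_mat m" and "B \<in> so_mat m"
  shows "mat_comm A B \<in> so_mat m"
proof -
  have carrier: "A \<in> carrier_mat m m" "B \<in> carrier_mat m m"
    and skew: "transpose_mat A = - A" "transpose_mat B = - B"
    using assms by (auto simp: so_mat_def)
  have "transpose_mat (mat_comm A B) = transpose_mat B * transpose_mat A - transpose_mat A * transpose_mat B"
    using carrier by (simp add: mat_comm_def transpose_minus[of _ m m] transpose_mult[of _ m m _ m])
  also have "\<dots> = B * A - A * B"
    using carrier skew by simp
  also have "\<dots> = - mat_comm A B"
    unfolding mat_comm_def by (rule eq_matI) (use carrier in auto)
  finally show ?thesis using carrier by (simp add: so_mat_def mat_comm_carrier)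
qed

fun so_rep :: "nat \<Rightarrow> lie_term \<Rightarrow> real mat" where
  "so_rep n (LGen i) = (if i < n then elem_skew (Suc n) i n else 0\<^sub>m (Suc n) (Suc n))"
| "so_rep n LZero = 0\<^sub>m (Suc n) (Suc n)"
| "so_rep n (LAdd s t) = so_rep n s + so_rep n t"
| "so_rep n (LSmul c s) = c \<cdot>\<^sub>m so_rep n s"
| "so_rep n (LBr s t) = mat_comm (so_rep n s) (so_rep n t)"

lemma so_rep_in_so: "so_rep n t \<in> so_mat (Suc n)"
  by (induction t)
    (auto simp: elem_skew_in_so so_mat_zero so_mat_add so_mat_smult so_mat_comm)

lemma so_rep_carrier [simp]: "so_rep n t \<in> carrier_mat (Suc n) (Suc n)"
  using so_rep_in_so by (simp add: so_mat_def)

lemma so_rep_dim [simp]: "dim_row (so_rep n t) = Suc n" "dim_col (so_rep n t) = Suc n"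
  using so_rep_carrier[of n t] by (auto simp del: so_rep_carrier)

lemma so_rep_berman_relation:
  assumes "i < n" "j < n" "i \<noteq> j"
  shows "so_rep n (LBr (LGen i) (LBr (LGen i) (LGen j))) = so_rep n (LSmul (-1) (LGen j))"
  using assms
  by (simp add: mat_comm_elem_skew_common mat_comm_elem_skew_chain) (rule eq_matI, auto)

lemma so_rep_respects_kc_eq: "kc_eq n s t \<Longrightarrow> so_rep n s = so_rep n t"
proof (induction rule: kc_eq.induct)
  case (add_comm s t)
  show ?case by (simp add: comm_add_mat[of _ "Suc n" "Suc n"])
next
  case (br_add s t u)
  show ?case by (simp add: mat_comm_add_left[of _ "Suc n"])
next
  case (br_smul c s t)
  show ?case by (simp add: mat_comm_smult_left[of _ "Suc n"])
next
  case (br_alt s)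
  show ?case by (simp add: mat_comm_self[of _ "Suc n"])
next
  case (jacobi s t u)
  show ?case by (simp only: so_rep.simps) (rule mat_comm_jacobi; simp)
next
  case (rel i j)
  then show ?case by (rule so_rep_berman_relation)
next
  case (add_inv s)
  show ?case by simp (rule eq_matI, auto)
next
  case (smul_add c s t)
  show ?case by simp (rule eq_matI, auto simp: algebra_simps)
next
  case (add_smul c d s)
  show ?case by simp (rule eq_matI, auto simp: algebra_simps)
next
  case (smul_smul c d s)
  show ?case by simp (rule eq_matI, auto)
next
  case (smul_one s)
  show ?case by simp (rule eq_matI, auto)
qed (auto simp: assoc_add_mat[of _ "Suc n" "Suc n"])

definition pair_term :: "nat \<Rightarrow> nat \<times> nat \<Rightarrow> lie_term" where
  "pair_term n x = (if snd x = n then LGen (fst x) else LBr (LGen (snd x)) (LGen (fst x)))"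

lemma so_rep_pair_term:
  "p < q \<Longrightarrow> q \<le> n \<Longrightarrow> so_rep n (pair_term n (p, q)) = elem_skew (Suc n) p q"
  by (auto simp: pair_term_def mat_comm_elem_skew_common)

lemma pair_term_wf: "p < q \<Longrightarrow> q \<le> n \<Longrightarrow> kc_wf n (pair_term n (p, q))"
  by (auto simp: pair_term_def)

fun pair_comb :: "nat \<Rightarrow> (nat \<times> nat \<Rightarrow> real) \<Rightarrow> (nat \<times> nat) list \<Rightarrow> lie_term" where
  "pair_comb n c [] = LZero"
| "pair_comb n c (x # xs) = LAdd (LSmul (c x) (pair_term n x)) (pair_comb n c xs)"

lemma so_rep_pair_comb_index:
  "r < Suc n \<Longrightarrow> s < Suc n \<Longrightarrow>
   so_rep n (pair_comb n c xs) $$ (r, s) = (\<Sum>x\<leftarrow>xs. c x * so_rep n (pair_term n x) $$ (r, s))"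
  by (induction xs) auto

lemma pair_comb_wf: "\<forall>x\<in>set xs. fst x < snd x \<and> snd x \<le> n \<Longrightarrow> kc_wf n (pair_comb n c xs)"
  by (induction xs) (auto intro: pair_term_wf)

lemma so_rep_surjective:
  assumes A: "A \<in> so_mat (Suc n)"
  shows "A \<in> so_rep n ` {t. kc_wf n t}"
proof -
  define P where "P = {(p, q). p < q \<and> q < Suc n}"
  have "finite P" unfolding P_def
    by (rule finite_subset[of _ "{..<Suc n} \<times> {..<Suc n}"]) auto
  define xs where "xs = sorted_list_of_set P"
  have set_xs: "set xs = P" and distinct_xs: "distinct xs"
    using \<open>finite P\<close> by (auto simp: xs_def)
  let ?t = "pair_comb n (\<lambda>x. A $$ x) xs"
  have "so_rep n ?t = A"
  proof (rule eq_matI)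
    fix r s assume "r < dim_row A" "s < dim_col A"
    then have rs: "r < Suc n" "s < Suc n"
      using A by (auto simp: so_mat_def)
    have "so_rep n ?t $$ (r, s) = (\<Sum>x\<in>P. A $$ x * so_rep n (pair_term n x) $$ (r, s))"
      using rs set_xs distinct_xs by (simp add: so_rep_pair_comb_index sum_list_distinct_conv_sum_set)
    also have "\<dots> = (\<Sum>x\<in>P. A $$ x * elem_skew (Suc n) (fst x) (snd x) $$ (r, s))"
      by (intro sum.cong) (auto simp: P_def so_rep_pair_term)
    also have "\<dots> = A $$ (r, s)"
      unfolding P_def by (rule skew_expansion_index[OF A rs])
    finally show "so_rep n ?t $$ (r, s) = A $$ (r, s)" .
  qed (use A in \<open>auto simp: so_mat_def\<close>)
  moreover have "kc_wf n ?t"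
    by (rule pair_comb_wf) (auto simp: set_xs P_def)
  ultimately show ?thesis
    by (intro image_eqI[of A _ ?t]) simp_all
qed

text \<open>The construction works for every n.\<close>
theorem mainTheorem12:
  fixes n :: nat
  assumes "n \<ge> 2"
  shows "\<exists>f. kc_hom_so n (n + 1) f \<and> so_mat (n + 1) \<subseteq> f ` {t. kc_wf n t}"
proof (intro exI conjI)
  show "kc_hom_so n (n + 1) (so_rep n)"
    unfolding kc_hom_so_def using so_rep_in_so so_rep_respects_kc_eq by auto
  show "so_mat (n + 1) \<subseteq> so_rep n ` {t. kc_wf n t}"
    using so_rep_surjective by auto
qed

end
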